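(* Let $T$ be a tree and $\mathfrak p=(R\overset{d}{\twoheadleftarrow}S\overset{j}{\hookrightarrow}T)\in\mathfrak P_T$. The map $\mathfrak P_R\to\mathfrak P_T(\ge\mathfrak p)$, $\mathfrak q\mapsto\mathfrak q\circ\mathfrak p$, is an isomorphism of posets, where $\mathfrak P_T(\ge\mathfrak p)=\{\mathfrak q\in\mathfrak P_T:\mathfrak q\ge\mathfrak p\}$ with the induced order.
   Context: A tree is a nonempty finite connected acyclic graph with vertex set $V(T)$ and edge set $E(T)$. Subgraphs are full (vertex-induced); a subtree is a subgraph which is a tree. A quotient tree $S\twoheadrightarrow R$ is a tree $R$ with a surjection $V(S)\to V(R)$ whose fibers are vertex sets of subtrees, vertices of $R$ adjacent iff an edge of $S$ joins their fibers. Poset $\mathfrak P_T$: elements are correspondences $(R\overset{q}{\twoheadleftarrow}S\overset{i}{\hookrightarrow}T)$ with $i$ inclusion of a subtree and $q$ a quotient of trees (equivalently, a subtree $S$ of $T$ with a partition of $S$ into subtrees, the fibers of $q$; correspondences differing by an isomorphism of the quotient tree compatible with the maps are identified). Composition: for $\mathfrak q=(P\twoheadleftarrow Q\hookrightarrow R)$ and $\mathfrak p=(R\twoheadleftarrow S\hookrightarrow T)$, $\mathfrak q\circ\mathfrak p=(P\twoheadleftarrow Q\times_RS\hookrightarrow T)$ where $Q\times_RS$ is the subtree of $S$ on the vertices mapping into $Q$, included into $T$ via $S$ and mapped onto $P$ via $Q$. Order: $\mathfrak p\ge\mathfrak p'$ iff $\mathfrak p=\mathfrak q\circ\mathfrak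 p'$ for some such correspondence $\mathfrak q$. *)

theory Defs
  imports Main
begin

type_synonym 'a graph = "'a set \<times> 'a set set"

definition is_graph :: "'a graph \<Rightarrow> bool" where
  "is_graph G \<longleftrightarrow> finite (fst G) \<and>
     (\<forall>e\<in>snd G. \<exists>u v. e = {u, v} \<and> u \<noteq> v \<and> u \<in> fst G \<and> v \<in> fst G)"

definition adj :: "'a graph \<Rightarrow> 'a \<Rightarrow> 'a \<Rightarrow> bool" where
  "adj G u v \<longleftrightarrow> u \<noteq> v \<and> {u, v} \<in> snd G"

definition graph_connected :: "'a graph \<Rightarrow> bool" where
  "graph_connected G \<longleftrightarrow>
     (\<forall>u\<in>fst G. \<forall>v\<in>fst G. (u, v) \<in> {(x, y). adj G x y}\<^sup>*)"

definition is_cycle :: "'a graph \<Rightarrow> 'a list \<Rightarrow> bool" where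
  "is_cycle G xs \<longleftrightarrow> length xs \<ge> 3 \<and> distinct xs \<and>
     (\<forall>i < length xs. adj G (xs ! i) (xs ! ((i + 1) mod length xs)))"

definition graph_acyclic :: "'a graph \<Rightarrow> bool" where
  "graph_acyclic G \<longleftrightarrow> \<not> (\<exists>xs. is_cycle G xs)"

definition is_tree :: "'a graph \<Rightarrow> bool" where
  "is_tree G \<longleftrightarrow> is_graph G \<and> fst G \<noteq> {} \<and> graph_connected G \<and> graph_acyclic G"

definition induced :: "'a graph \<Rightarrow> 'a set \<Rightarrow> 'a graph" where
  "induced G W = (W, {e \<in> snd G. e \<subseteq> W})"

definition subtree_set :: "'a graph \<Rightarrow> 'a set \<Rightarrow> bool" where
  "subtree_set G W \<longleftrightarrow> W \<subseteq> fst G \<and> is_tree (induced G W)"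

definition quotient_graph :: "'a graph \<Rightarrow> 'a set set \<Rightarrow> 'a set graph" where
  "quotient_graph G P = (P, {{B, C} | B C. B \<in> P \<and> C \<in> P \<and> B \<noteq> C \<and>
       (\<exists>u\<in>B. \<exists>v\<in>C. {u, v} \<in> snd G)})"

text \<open>An element of P_T: correspondence R <<- S -> T, encoded by the set of fibers of
  the quotient map S ->> R (a partition of the subtree S = \<Union>P into subtrees),
  the quotient tree R being determined up to isomorphism by the fibers.\<close>
definition is_corr :: "'a graph \<Rightarrow> 'a set set \<Rightarrow> bool" where
  "is_corr G P \<longleftrightarrow>
     subtree_set G (\<Union>P) \<and>
     (\<forall>B\<in>P. subtree_set G B) \<and>
     (\<forall>B\<in>P. \<forall>C\<in>P. B \<noteq> C \<longrightarrow> B \<inter> C = {}) \<and>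
     is_tree (quotient_graph G P)"

definition PP :: "'a graph \<Rightarrow> 'a set set set" where
  "PP G = {P. is_corr G P}"

text \<open>Composition q \<circ> p, for q in P_R with R = quotient_graph T p: the fiber of
  Q \<times>_R S over a vertex of P (a set B' of blocks of p) is \<Union>B'.\<close>
definition comp_corr :: "'a set set set \<Rightarrow> 'a set set \<Rightarrow> 'a set set" where
  "comp_corr Q P = (\<lambda>B'. \<Union>B') ` Q"

definition corr_ge :: "'a graph \<Rightarrow> 'a set set \<Rightarrow> 'a set set \<Rightarrow> bool" where
  "corr_ge G p p' \<longleftrightarrow> (\<exists>q \<in> PP (quotient_graph G p'). p = comp_corr q p')"

end

theory Submission
  imports Defs
begin

text \<open>The composite q \<circ> p has as fibres the unions \<Union>X of the fibres X of q, which are sets of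
  blocks of p. Since the blocks of p are nonempty and pairwise disjoint, \<Union> is injective on sets
  of blocks, so composition with p is injective; it lands in P_T because a family of blocks
  forming a subtree of the quotient R has a connected, hence subtree, union in T. Surjectivity
  onto P_T(\<ge> p) is the definition of the order. For the order itself, \<Union> is an isomorphism from
  the quotient of R by q2 onto the quotient of T by q2 \<circ> p; isomorphic trees carry the same
  correspondences and composition is associative, so q1 \<ge> q2 in P_R iff q1 \<circ> p \<ge> q2 \<circ> p in P_T.\<close>

section \<open>Relabelling graphs along injections\<close>

definition map_graph :: "('a \<Rightarrow> 'b) \<Rightarrow> 'a graph \<Rightarrow> 'b graph" where
  "map_graph f G = (f ` fst G, image f ` snd G)"

lemma edge_subset_vertices: "is_graph G \<Longrightarrow> e \<in> snd G \<Longrightarrow> e \<subseteq> fst G"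
  unfolding is_graph_def by fastforce

lemma adj_vertices: "is_graph G \<Longrightarrow> adj G x y \<Longrightarrow> x \<in> fst G \<and> y \<in> fst G"
  unfolding adj_def using edge_subset_vertices by fastforce

lemma rtrancl_map_pred:
  assumes "(x, y) \<in> {(x, y). R x y}\<^sup>*" and "\<And>x y. R x y \<Longrightarrow> S (f x) (f y)"
  shows "(f x, f y) \<in> {(x, y). S x y}\<^sup>*"
  using assms(1) by induction (auto intro: rtrancl_into_rtrancl assms(2))

lemma is_cycle_map:
  assumes "is_cycle G xs" and "inj_on h (set xs)" and "\<And>x y. adj G x y \<Longrightarrow> adj H (h x) (h y)"
  shows "is_cycle H (map h xs)"
  unfolding is_cycle_def
proof (intro conjI allI impI)
  fix i assume i: "i < length (map h xs)"
  then have "0 < length xs" by (cases xs) auto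
  then have "Suc i mod length xs < length xs" by simp
  then show "adj H (map h xs ! i) (map h xs ! ((i + 1) mod length (map h xs)))"
    using assms i unfolding is_cycle_def by simp
qed (use assms in \<open>auto simp: is_cycle_def distinct_map\<close>)

lemma is_graph_map_graph:
  assumes g: "is_graph G" and f: "inj_on f (fst G)"
  shows "is_graph (map_graph f G)"
  using g inj_onD[OF f] unfolding is_graph_def map_graph_def by fastforce

lemma edge_map_graph_iff:
  assumes g: "is_graph G" and f: "inj_on f (fst G)" and "x \<in> fst G" "y \<in> fst G"
  shows "{f x, f y} \<in> snd (map_graph f G) \<longleftrightarrow> {x, y} \<in> snd G"
proof
  assume "{f x, f y} \<in> snd (map_graph f G)"
  then obtain e where e: "e \<in> snd G" "f ` {x, y} = f ` e" unfolding map_graph_def by auto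
  have "{x, y} = e"
    using inj_on_image_eq_iff[OF f _ edge_subset_vertices[OF g e(1)], of "{x, y}"] e assms(3,4)
    by simp
  with e show "{x, y} \<in> snd G" by simp
next
  assume "{x, y} \<in> snd G"
  then show "{f x, f y} \<in> snd (map_graph f G)"
    using image_eqI[of "{f x, f y}" "image f" "{x, y}"] by (simp add: map_graph_def)
qed

lemma adj_map_graph_iff:
  assumes g: "is_graph G" and f: "inj_on f (fst G)"
  shows "adj (map_graph f G) a b \<longleftrightarrow> (\<exists>x y. a = f x \<and> b = f y \<and> adj G x y)"
proof
  assume "adj (map_graph f G) a b"
  then obtain x y where xy: "{x, y} \<in> snd G" "{a, b} = {f x, f y}" "a \<noteq> b"
    using g unfolding adj_def map_graph_def is_graph_def by fastforce
  then have "x \<noteq> y" by auto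
  with xy have "adj G x y" "adj G y x" unfolding adj_def by (auto simp: insert_commute)
  with xy(2) show "\<exists>x y. a = f x \<and> b = f y \<and> adj G x y"
    by (auto simp: doubleton_eq_iff)
next
  assume "\<exists>x y. a = f x \<and> b = f y \<and> adj G x y"
  then obtain x y where ab: "a = f x" "b = f y" and xy: "adj G x y" by blast
  have "f x \<noteq> f y"
    using xy adj_vertices[OF g xy] inj_onD[OF f] unfolding adj_def by blast
  then show "adj (map_graph f G) a b"
    using xy adj_vertices[OF g xy] edge_map_graph_iff[OF g f] unfolding ab adj_def by blast
qed

lemma map_graph_inv_into:
  assumes g: "is_graph G" and f: "inj_on f (fst G)"
  shows "map_graph (inv_into (fst G) f) (map_graph f G) = G"
proof -
  have "inv_into (fst G) f ` f ` e = e" if "e \<in> snd G" for e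
    using edge_subset_vertices[OF g that] f by (simp add: inv_into_image_cancel)
  then have "image (inv_into (fst G) f) ` image f ` snd G = snd G"
    by (simp add: image_image)
  then show ?thesis using f by (simp add: map_graph_def inv_into_image_cancel prod_eq_iff)
qed

lemma is_tree_map_graph:
  assumes t: "is_tree G" and f: "inj_on f (fst G)"
  shows "is_tree (map_graph f G)"
proof -
  have g: "is_graph G" using t unfolding is_tree_def by simp
  have "graph_connected (map_graph f G)"
    unfolding graph_connected_def
  proof (intro ballI)
    fix a b assume "a \<in> fst (map_graph f G)" "b \<in> fst (map_graph f G)"
    then obtain x y where xy: "x \<in> fst G" "y \<in> fst G" and ab: "a = f x" "b = f y"
      by (auto simp: map_graph_def)
    with t have "(x, y) \<in> {(x, y). adj G x y}\<^sup>*"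
      unfolding is_tree_def graph_connected_def by blast
    from rtrancl_map_pred[OF this, of "adj (map_graph f G)" f]
    show "(a, b) \<in> {(x, y). adj (map_graph f G) x y}\<^sup>*"
      unfolding ab adj_map_graph_iff[OF g f] by blast
  qed
  moreover have "graph_acyclic (map_graph f G)"
    unfolding graph_acyclic_def
  proof
    assume "\<exists>xs. is_cycle (map_graph f G) xs"
    then obtain xs where xs: "is_cycle (map_graph f G) xs" ..
    let ?h = "inv_into (fst G) f"
    have "set xs \<subseteq> fst (map_graph f G)"
      using xs adj_vertices[OF is_graph_map_graph[OF g f]]
      unfolding is_cycle_def by (metis in_set_conv_nth subsetI)
    then have "inj_on ?h (set xs)"
      by (simp add: map_graph_def inj_on_inv_into)
    moreover have "adj G (?h a) (?h b)" if "adj (map_graph f G) a b" for a b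
      using that adj_vertices[OF g] f by (auto simp: adj_map_graph_iff[OF g f])
    ultimately have "is_cycle G (map ?h xs)" using is_cycle_map[OF xs] by blast
    then show False using t unfolding is_tree_def graph_acyclic_def by blast
  qed
  ultimately show ?thesis
    using t is_graph_map_graph[OF g f] unfolding is_tree_def by (simp add: map_graph_def)
qed

lemma induced_map_graph:
  assumes g: "is_graph G" and f: "inj_on f (fst G)" and W: "W \<subseteq> fst G"
  shows "induced (map_graph f G) (f ` W) = map_graph f (induced G W)"
proof -
  have "f ` e \<subseteq> f ` W \<longleftrightarrow> e \<subseteq> W" if "e \<in> snd G" for e
    unfolding image_subset_iff
    using inj_on_image_mem_iff[OF f _ W] edge_subset_vertices[OF g that] by blast
  then show ?thesis unfolding induced_def map_graph_def by auto
qed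

lemma subtree_set_map_graph:
  assumes g: "is_graph G" and f: "inj_on f (fst G)" and W: "subtree_set G W"
  shows "subtree_set (map_graph f G) (f ` W)"
proof -
  have "W \<subseteq> fst G" using W unfolding subtree_set_def by simp
  moreover have "is_tree (map_graph f (induced G W))"
    using W inj_on_subset[OF f]
    by (intro is_tree_map_graph) (auto simp: subtree_set_def induced_def)
  ultimately show ?thesis
    using induced_map_graph[OF g f] unfolding subtree_set_def by (auto simp: map_graph_def)
qed

lemma quotient_graph_image:
  assumes g: "inj_on g P"
    and edges: "\<And>B C. B \<in> P \<Longrightarrow> C \<in> P \<Longrightarrow> B \<noteq> C \<Longrightarrow>
      (\<exists>u\<in>g B. \<exists>v\<in>g C. {u, v} \<in> snd H) \<longleftrightarrow> (\<exists>u\<in>B. \<exists>v\<in>C. {u, v} \<in> snd G)"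
  shows "quotient_graph H (g ` P) = map_graph g (quotient_graph G P)"
proof -
  have "{{B', C'} | B' C'. B' \<in> g ` P \<and> C' \<in> g ` P \<and> B' \<noteq> C' \<and>
          (\<exists>u\<in>B'. \<exists>v\<in>C'. {u, v} \<in> snd H)}
      = image g ` {{B, C} | B C. B \<in> P \<and> C \<in> P \<and> B \<noteq> C \<and>
          (\<exists>u\<in>B. \<exists>v\<in>C. {u, v} \<in> snd G)}"
    (is "?L = image g ` ?R")
  proof (intro equalityI subsetI)
    fix e assume "e \<in> ?L"
    then obtain B C where BC: "B \<in> P" "C \<in> P" "g B \<noteq> g C" "e = {g B, g C}"
      and H: "\<exists>u\<in>g B. \<exists>v\<in>g C. {u, v} \<in> snd H" by blast
    have "B \<noteq> C" using BC(3) by blast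
    then have "{B, C} \<in> ?R" using edges[OF BC(1,2)] H BC(1,2) by blast
    moreover have "e = g ` {B, C}" using BC(4) by simp
    ultimately show "e \<in> image g ` ?R" by blast
  next
    fix e assume "e \<in> image g ` ?R"
    then obtain B C where BC: "B \<in> P" "C \<in> P" "B \<noteq> C" "e = g ` {B, C}"
      and G: "\<exists>u\<in>B. \<exists>v\<in>C. {u, v} \<in> snd G" by blast
    have "g B \<noteq> g C" using inj_onD[OF g _ BC(1,2)] BC(3) by blast
    moreover have "\<exists>u\<in>g B. \<exists>v\<in>g C. {u, v} \<in> snd H" using edges[OF BC(1,2,3)] G by blast
    ultimately show "e \<in> ?L" using BC(1,2,4) by auto
  qed
  then show ?thesis unfolding quotient_graph_def map_graph_def by simp
qed

lemma quotient_graph_map_graph: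
  assumes g: "is_graph G" and f: "inj_on f (fst G)" and P: "\<forall>B\<in>P. B \<subseteq> fst G"
  shows "quotient_graph (map_graph f G) (image f ` P) = map_graph (image f) (quotient_graph G P)"
proof (rule quotient_graph_image)
  show "inj_on (image f) P"
    using inj_on_subset[OF inj_on_image_Pow[OF f]] P by blast
  fix B C assume "B \<in> P" "C \<in> P"
  then have "{f u, f v} \<in> snd (map_graph f G) \<longleftrightarrow> {u, v} \<in> snd G" if "u \<in> B" "v \<in> C" for u v
    using edge_map_graph_iff[OF g f] that P by blast
  then show "(\<exists>u\<in>f ` B. \<exists>v\<in>f ` C. {u, v} \<in> snd (map_graph f G)) \<longleftrightarrow>
      (\<exists>u\<in>B. \<exists>v\<in>C. {u, v} \<in> snd G)"
    by blast
qed

lemma is_corr_map_graph: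
  assumes g: "is_graph G" and f: "inj_on f (fst G)" and P: "is_corr G P"
  shows "is_corr (map_graph f G) (image f ` P)"
proof -
  have PG: "\<forall>B\<in>P. B \<subseteq> fst G" using P unfolding is_corr_def subtree_set_def by blast
  have "inj_on (image f) P"
    using inj_on_subset[OF inj_on_image_Pow[OF f]] PG by blast
  then have "is_tree (map_graph (image f) (quotient_graph G P))"
    using P by (intro is_tree_map_graph) (simp_all add: is_corr_def quotient_graph_def)
  then have "is_tree (quotient_graph (map_graph f G) (image f ` P))"
    by (simp add: quotient_graph_map_graph[OF g f PG])
  moreover have "f ` B \<inter> f ` C = {}" if "B \<in> P" "C \<in> P" "f ` B \<noteq> f ` C" for B C
  proof -
    have "B \<noteq> C" using that(3) by auto
    then have "B \<inter> C = {}" using that(1,2) P unfolding is_corr_def by blast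
    then show ?thesis using inj_on_image_Int[OF f] that(1,2) PG by (metis image_empty)
  qed
  ultimately show ?thesis
    using P subtree_set_map_graph[OF g f] subtree_set_map_graph[OF g f, of "\<Union>P"]
    unfolding is_corr_def by (simp add: image_Union)
qed

lemma PP_map_graph:
  assumes g: "is_graph G" and f: "inj_on f (fst G)"
  shows "PP (map_graph f G) = image (image f) ` PP G"
proof (intro equalityI subsetI)
  fix Q assume "Q \<in> PP (map_graph f G)"
  let ?h = "inv_into (fst G) f"
  have "inj_on ?h (fst (map_graph f G))" by (simp add: map_graph_def inj_on_inv_into)
  then have "is_corr (map_graph ?h (map_graph f G)) (image ?h ` Q)"
    using is_corr_map_graph[OF is_graph_map_graph[OF g f]] \<open>Q \<in> PP (map_graph f G)\<close>
    by (simp add: PP_def)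
  then have hQ: "image ?h ` Q \<in> PP G" by (simp add: map_graph_inv_into[OF g f] PP_def)
  have "image f ` image ?h ` Q = Q"
  proof -
    have "B \<subseteq> f ` fst G" if "B \<in> Q" for B
      using that \<open>Q \<in> PP (map_graph f G)\<close>
      unfolding PP_def is_corr_def subtree_set_def map_graph_def by auto
    then have cancel: "\<And>B. B \<in> Q \<Longrightarrow> f ` ?h ` B = B" by (simp add: image_inv_into_cancel)
    have "image f ` image ?h ` Q = (\<lambda>B. f ` ?h ` B) ` Q" by (simp only: image_image)
    also have "\<dots> = (\<lambda>B. B) ` Q" by (rule image_cong) (simp_all add: cancel)
    finally show ?thesis by simp
  qed
  then show "Q \<in> image (image f) ` PP G" using hQ by (rule image_eqI[OF sym])
next
  fix Q assume "Q \<in> image (image f) ` PP G"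
  then obtain P where "P \<in> PP G" "Q = image f ` P" by blast
  then show "Q \<in> PP (map_graph f G)" using is_corr_map_graph[OF g f, of P] by (simp add: PP_def)
qed

section \<open>Unions of blocks\<close>

lemma is_graph_induced:
  assumes g: "is_graph G" and W: "W \<subseteq> fst G"
  shows "is_graph (induced G W)"
  using g finite_subset[OF W] unfolding is_graph_def induced_def by fastforce

lemma graph_acyclic_induced: "graph_acyclic G \<Longrightarrow> graph_acyclic (induced G W)"
proof -
  have "is_cycle G xs" if "is_cycle (induced G W) xs" for xs
    using that unfolding is_cycle_def adj_def induced_def by auto
  then show "graph_acyclic G \<Longrightarrow> graph_acyclic (induced G W)"
    unfolding graph_acyclic_def by blast
qed

lemma rtrancl_adj_induced_mono:
  assumes "(x, y) \<in> {(x, y). adj (induced G V) x y}\<^sup>*" and "V \<subseteq> W"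
  shows "(x, y) \<in> {(x, y). adj (induced G W) x y}\<^sup>*"
  using rtrancl_map_pred[OF assms(1), of "adj (induced G W)" id] assms(2)
  unfolding adj_def induced_def by auto

lemma quotient_graph_edgeD:
  assumes "{C, D} \<in> snd (quotient_graph G P)"
  shows "\<exists>u\<in>C. \<exists>v\<in>D. {u, v} \<in> snd G"
proof -
  from assms obtain B B' where BB': "{C, D} = {B, B'}" "\<exists>u\<in>B. \<exists>v\<in>B'. {u, v} \<in> snd G"
    unfolding quotient_graph_def by auto
  then consider "C = B" "D = B'" | "C = B'" "D = B" by (auto simp: doubleton_eq_iff)
  then show ?thesis using BB'(2) by cases (blast, metis insert_commute)
qed

lemma graph_connected_induced_Union:
  assumes g: "is_graph G"
    and blocks: "\<And>B. B \<in> W \<Longrightarrow> graph_connected (induced G B)"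
    and W: "graph_connected (induced (quotient_graph G P) W)"
  shows "graph_connected (induced G (\<Union>W))"
proof -
  let ?A = "{(x, y). adj (induced G (\<Union>W)) x y}"
  have inside: "(x, y) \<in> ?A\<^sup>*" if "B \<in> W" "x \<in> B" "y \<in> B" for B x y
    using blocks[OF that(1)] that rtrancl_adj_induced_mono[of x y G B "\<Union>W"]
    unfolding graph_connected_def induced_def by auto
  have across: "\<forall>x\<in>B. \<forall>y\<in>C. (x, y) \<in> ?A\<^sup>*"
    if "(B, C) \<in> {(x, y). adj (induced (quotient_graph G P) W) x y}\<^sup>*" "B \<in> W" for B C
    using that(1)
  proof (induction rule: rtrancl_induct)
    case base
    then show ?case using inside that(2) by blast
  next
    case (step C D)
    then have CD: "{C, D} \<in> snd (quotient_graph G P)" "C \<in> W" "D \<in> W"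
      unfolding adj_def induced_def by auto
    then obtain u v where uv: "u \<in> C" "v \<in> D" "{u, v} \<in> snd G"
      using quotient_graph_edgeD by blast
    have "u \<noteq> v" using g uv(3) unfolding is_graph_def by force
    then have "(u, v) \<in> ?A" using uv CD unfolding adj_def induced_def by auto
    then show ?case
      using step.IH uv inside[OF CD(3) uv(2)] by (meson rtrancl_into_rtrancl rtrancl_trans)
  qed
  show ?thesis
    unfolding graph_connected_def
  proof (intro ballI)
    fix x y assume "x \<in> fst (induced G (\<Union>W))" "y \<in> fst (induced G (\<Union>W))"
    then obtain B C where BC: "B \<in> W" "C \<in> W" "x \<in> B" "y \<in> C" unfolding induced_def by auto
    then have "(B, C) \<in> {(x, y). adj (induced (quotient_graph G P) W) x y}\<^sup>*"
      using W unfolding graph_connected_def induced_def by simp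
    with across BC show "(x, y) \<in> ?A\<^sup>*" by blast
  qed
qed

lemma subtree_set_nonempty: "subtree_set G B \<Longrightarrow> B \<noteq> {}"
  unfolding subtree_set_def is_tree_def induced_def by simp

lemma subtree_set_Union_blocks:
  assumes t: "is_tree G"
    and blocks: "\<And>B. B \<in> W \<Longrightarrow> subtree_set G B"
    and W: "subtree_set (quotient_graph G P) W"
  shows "subtree_set G (\<Union>W)"
proof -
  have g: "is_graph G" using t unfolding is_tree_def by simp
  have UW: "\<Union>W \<subseteq> fst G" using blocks unfolding subtree_set_def by blast
  have "\<Union>W \<noteq> {}" using subtree_set_nonempty[OF W] subtree_set_nonempty[OF blocks] by blast
  moreover have "graph_connected (induced G (\<Union>W))"
    using graph_connected_induced_Union[OF g, of W P] blocks W
    unfolding subtree_set_def is_tree_def by blast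
  moreover have "graph_acyclic (induced G (\<Union>W))"
    using t graph_acyclic_induced unfolding is_tree_def by blast
  ultimately show ?thesis
    using UW is_graph_induced[OF g UW] unfolding subtree_set_def is_tree_def
    by (simp add: induced_def)
qed

section \<open>Composition of correspondences\<close>

lemma PPD:
  assumes "P \<in> PP G"
  shows "subtree_set G (\<Union>P)" and "\<And>B. B \<in> P \<Longrightarrow> subtree_set G B"
    and "\<And>B C. B \<in> P \<Longrightarrow> C \<in> P \<Longrightarrow> B \<noteq> C \<Longrightarrow> B \<inter> C = {}"
    and "is_tree (quotient_graph G P)"
  using assms unfolding PP_def is_corr_def by auto

lemma PP_quotient_subset_Pow: "q \<in> PP (quotient_graph G P) \<Longrightarrow> q \<subseteq> Pow P"
  unfolding PP_def is_corr_def subtree_set_def quotient_graph_def by auto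

lemma inj_on_Union_Pow:
  assumes nonempty: "\<And>B. B \<in> P \<Longrightarrow> B \<noteq> {}"
    and disjoint: "\<And>B C. B \<in> P \<Longrightarrow> C \<in> P \<Longrightarrow> B \<noteq> C \<Longrightarrow> B \<inter> C = {}"
  shows "inj_on Union (Pow P)"
proof -
  have "X \<subseteq> Y" if XY: "X \<subseteq> P" "Y \<subseteq> P" "\<Union>X = \<Union>Y" for X Y
  proof
    fix B assume "B \<in> X"
    then obtain x where "x \<in> B" using nonempty XY(1) by blast
    then obtain C where "C \<in> Y" "x \<in> C" using \<open>B \<in> X\<close> XY(3) by blast
    then have "B = C" using disjoint[of B C] \<open>B \<in> X\<close> \<open>x \<in> B\<close> XY(1,2) by blast
    with \<open>C \<in> Y\<close> show "B \<in> Y" by simp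
  qed
  then show ?thesis unfolding inj_on_def by (metis PowD subset_antisym)
qed

lemma inj_on_Union_Pow_PP: "P \<in> PP G \<Longrightarrow> inj_on Union (Pow P)"
  using inj_on_Union_Pow PPD(2,3) subtree_set_nonempty by metis

lemma comp_corr_eq_iff:
  assumes "p \<in> PP T" and "q1 \<subseteq> Pow p" and "q2 \<subseteq> Pow p"
  shows "comp_corr q1 p = comp_corr q2 p \<longleftrightarrow> q1 = q2"
  unfolding comp_corr_def using inj_on_image_eq_iff[OF inj_on_Union_Pow_PP] assms by metis

text \<open>comp_corr ignores its second argument, hence the unrelated p', q and p.\<close>
lemma comp_corr_comp_corr: "comp_corr (image Union ` r) p' = comp_corr (comp_corr r q) p"
  unfolding comp_corr_def by (auto simp: image_image)

lemma comp_corr_subset_Pow: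
  "r \<in> PP (quotient_graph G q) \<Longrightarrow> q \<subseteq> Pow p \<Longrightarrow> comp_corr r q \<subseteq> Pow p"
  using PP_quotient_subset_Pow unfolding comp_corr_def by blast

lemma quotient_graph_comp_corr:
  assumes p: "p \<in> PP T" and q: "q \<in> PP (quotient_graph T p)"
  shows "quotient_graph T (comp_corr q p) = map_graph Union (quotient_graph (quotient_graph T p) q)"
  unfolding comp_corr_def
proof (rule quotient_graph_image)
  have "q \<subseteq> Pow p" using PP_quotient_subset_Pow[OF q] .
  then show "inj_on Union q" using inj_on_subset[OF inj_on_Union_Pow_PP[OF p]] by blast
  fix X Y assume XY: "X \<in> q" "Y \<in> q" "X \<noteq> Y"
  show "(\<exists>u\<in>\<Union>X. \<exists>v\<in>\<Union>Y. {u, v} \<in> snd T) \<longleftrightarrow>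
      (\<exists>b\<in>X. \<exists>c\<in>Y. {b, c} \<in> snd (quotient_graph T p))"
  proof
    assume "\<exists>u\<in>\<Union>X. \<exists>v\<in>\<Union>Y. {u, v} \<in> snd T"
    then obtain u v b c where uv: "b \<in> X" "c \<in> Y" "u \<in> b" "v \<in> c" "{u, v} \<in> snd T" by blast
    have "b \<noteq> c" using PPD(3)[OF q XY] uv by blast
    moreover have "b \<in> p" "c \<in> p" using \<open>q \<subseteq> Pow p\<close> XY uv by auto
    ultimately have "{b, c} \<in> snd (quotient_graph T p)"
      using uv unfolding quotient_graph_def by auto
    with uv show "\<exists>b\<in>X. \<exists>c\<in>Y. {b, c} \<in> snd (quotient_graph T p)" by blast
  qed (use quotient_graph_edgeD in blast)
qed

lemma comp_corr_in_PP:
  assumes t: "is_tree T" and p: "p \<in> PP T" and q: "q \<in> PP (quotient_graph T p)"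
  shows "comp_corr q p \<in> PP T"
proof -
  have qp: "q \<subseteq> Pow p" using PP_quotient_subset_Pow[OF q] .
  have lift: "subtree_set T (\<Union>W)" if "subtree_set (quotient_graph T p) W" "W \<subseteq> p" for W
    using subtree_set_Union_blocks[OF t _ that(1)] PPD(2)[OF p] that(2) by blast
  have "\<Union>q \<subseteq> p" using qp by blast
  then have "subtree_set T (\<Union>(\<Union>q))" using lift[OF PPD(1)[OF q]] by blast
  moreover have "\<Union>(comp_corr q p) = \<Union>(\<Union>q)" unfolding comp_corr_def by blast
  ultimately have "subtree_set T (\<Union>(comp_corr q p))" by simp
  moreover have "\<forall>B\<in>comp_corr q p. subtree_set T B"
    using lift PPD(2)[OF q] qp unfolding comp_corr_def by blast
  moreover have "\<Union>X \<inter> \<Union>Y = {}" if "X \<in> q" "Y \<in> q" "\<Union>X \<noteq> \<Union>Y" for X Y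
  proof -
    have "X \<inter> Y = {}" using PPD(3)[OF q that(1,2)] that(3) by blast
    then show ?thesis using PPD(3)[OF p] qp that(1,2) by blast
  qed
  moreover have "is_tree (quotient_graph T (comp_corr q p))"
    unfolding quotient_graph_comp_corr[OF p q]
    using is_tree_map_graph[OF PPD(4)[OF q]] inj_on_subset[OF inj_on_Union_Pow_PP[OF p] qp]
    by (simp add: quotient_graph_def)
  ultimately show ?thesis unfolding PP_def is_corr_def comp_corr_def by blast
qed

lemma corr_ge_comp_corr_iff:
  assumes p: "p \<in> PP T"
    and q1: "q1 \<in> PP (quotient_graph T p)" and q2: "q2 \<in> PP (quotient_graph T p)"
  shows "corr_ge (quotient_graph T p) q1 q2 \<longleftrightarrow> corr_ge T (comp_corr q1 p) (comp_corr q2 p)"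
proof -
  let ?G = "quotient_graph (quotient_graph T p) q2"
  have g: "is_graph ?G" using PPD(4)[OF q2] unfolding is_tree_def by simp
  have "inj_on Union (fst ?G)"
    using inj_on_subset[OF inj_on_Union_Pow_PP[OF p] PP_quotient_subset_Pow[OF q2]]
    by (simp add: quotient_graph_def)
  then have PP_comp: "PP (quotient_graph T (comp_corr q2 p)) = image (image Union) ` PP ?G"
    using PP_map_graph[OF g] quotient_graph_comp_corr[OF p q2] by simp
  have "corr_ge T (comp_corr q1 p) (comp_corr q2 p) \<longleftrightarrow>
      (\<exists>r\<in>PP ?G. comp_corr q1 p = comp_corr (image Union ` r) (comp_corr q2 p))"
    unfolding corr_ge_def PP_comp by blast
  also have "\<dots> \<longleftrightarrow> (\<exists>r\<in>PP ?G. q1 = comp_corr r q2)"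
    using comp_corr_eq_iff[OF p PP_quotient_subset_Pow[OF q1]
        comp_corr_subset_Pow[OF _ PP_quotient_subset_Pow[OF q2]]]
    by (simp add: comp_corr_comp_corr[of _ _ q2 p])
  finally show ?thesis unfolding corr_ge_def by blast
qed

theorem lemma2p22:
  fixes T :: "'a graph" and p :: "'a set set"
  assumes "is_tree T" and "p \<in> PP T"
  shows "bij_betw (\<lambda>q. comp_corr q p) (PP (quotient_graph T p))
           {q \<in> PP T. corr_ge T q p}
       \<and> (\<forall>q1 \<in> PP (quotient_graph T p). \<forall>q2 \<in> PP (quotient_graph T p).
            corr_ge (quotient_graph T p) q1 q2 \<longleftrightarrow>
            corr_ge T (comp_corr q1 p) (comp_corr q2 p))"
proof
  let ?R = "quotient_graph T p"
  have "inj_on (\<lambda>q. comp_corr q p) (PP ?R)"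
    using comp_corr_eq_iff[OF assms(2) PP_quotient_subset_Pow PP_quotient_subset_Pow]
    by (intro inj_onI) simp
  moreover have "(\<lambda>q. comp_corr q p) ` PP ?R = {q \<in> PP T. corr_ge T q p}"
    using comp_corr_in_PP[OF assms] unfolding corr_ge_def by blast
  ultimately show "bij_betw (\<lambda>q. comp_corr q p) (PP ?R) {q \<in> PP T. corr_ge T q p}"
    unfolding bij_betw_def by blast
  show "\<forall>q1 \<in> PP ?R. \<forall>q2 \<in> PP ?R. corr_ge ?R q1 q2 \<longleftrightarrow> corr_ge T (comp_corr q1 p) (comp_corr q2 p)"
    using corr_ge_comp_corr_iff[OF assms(2)] by blast
qed

end
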